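(* Let $I$ be an open interval of real numbers and let $U$ be a subgroup of $\mathrm{Homeo}^+(I)$ such that: (1) the commutator subgroup $[U,U]$ acts freely on $I$ (i.e., every non-identity element of $[U,U]$ has no fixed point in $I$); and (2) each non-identity member of $U$ has at most one fixed point in $I$. Then for every nonempty set $S$ there exists a good $U$-anonymous $S$-predictor on $I$.
   Context: $\mathrm{Homeo}^+(I)$ is the group (under composition) of increasing homeomorphisms of $I$. Write $a=\inf I$ (possibly $-\infty$). For a nonempty set $S$, let ${}^I S$ be the set of total functions $I\to S$, and let $\mathcal{D}$ be the set of all functions $f$ with values in $S$ whose domain is $(a,t_f)$ for some $t_f\in I$. An $S$-predictor on $I$ is any function $\mathcal{P}:\mathcal{D}\to S$. It is good if for every $F\in {}^I S$ the set $\{t\in I : \mathcal{P}(F|_{(a,t)})\neq F(t)\}$ has Lebesgue measure zero. For $f\in\mathcal{D}$ and $\varphi\in\mathrm{Homeo}^+(I)$, $f\circ\varphi$ is the function with domain $(a,\varphi^{-1}(t_f))$. For $U\subseteq \mathrm{Homeo}^+(I)$, $\mathcal{P}$ is $U$-anonymous if $\mathcal{P}(f)=\mathcal{P}(f\circ\varphi)$ for all $f\in\mathcal{D}$ and all $\varphi\in U$. The commutator subgroup $[U,U]$ is the subgroup generated by all elements $\alpha\beta\alpha^{-1}\beta^{-1}$ with $\alpha,\beta\in U$. (The Axiom of Choice is assumed.) *)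

theory Defs
  imports "HOL-Analysis.Analysis"
begin

(* Homeo^+(I): increasing homeomorphisms of I, represented extensionally
   (identity outside I), so that the group operation is plain composition
   and the inverse is inv. *)
definition homeo_plus :: "real set \<Rightarrow> (real \<Rightarrow> real) set" where
  "homeo_plus I = {\<phi>. bij_betw \<phi> I I \<and> strict_mono_on I \<phi> \<and> continuous_on I \<phi>
                        \<and> (\<forall>x. x \<notin> I \<longrightarrow> \<phi> x = x)}"

definition is_subgroup_homeo :: "real set \<Rightarrow> (real \<Rightarrow> real) set \<Rightarrow> bool" where
  "is_subgroup_homeo I U \<longleftrightarrow> U \<subseteq> homeo_plus I \<and> id \<in> U
     \<and> (\<forall>\<alpha>\<in>U. \<forall>\<beta>\<in>U. \<alpha> \<circ> \<beta> \<in> U) \<and> (\<forall>\<alpha>\<in>U. inv \<alpha> \<in> U)"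

inductive_set commutator_subgroup :: "(real \<Rightarrow> real) set \<Rightarrow> (real \<Rightarrow> real) set"
  for U :: "(real \<Rightarrow> real) set" where
  comm_id: "id \<in> commutator_subgroup U"
| comm_gen: "\<alpha> \<in> U \<Longrightarrow> \<beta> \<in> U \<Longrightarrow> \<alpha> \<circ> \<beta> \<circ> inv \<alpha> \<circ> inv \<beta> \<in> commutator_subgroup U"
| comm_comp: "g \<in> commutator_subgroup U \<Longrightarrow> h \<in> commutator_subgroup U \<Longrightarrow> g \<circ> h \<in> commutator_subgroup U"
| comm_inv: "g \<in> commutator_subgroup U \<Longrightarrow> inv g \<in> commutator_subgroup U"

definition pred_domain :: "real set \<Rightarrow> 's set \<Rightarrow> (real \<rightharpoonup> 's) set" where
  "pred_domain I S = {f. (\<exists>t\<in>I. dom f = {x\<in>I. x < t}) \<and> ran f \<subseteq> S}"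

definition restr_to :: "real set \<Rightarrow> (real \<Rightarrow> 's) \<Rightarrow> real \<Rightarrow> (real \<rightharpoonup> 's)" where
  "restr_to I F t = (Some \<circ> F) |` {x\<in>I. x < t}"

definition is_predictor :: "real set \<Rightarrow> 's set \<Rightarrow> ((real \<rightharpoonup> 's) \<Rightarrow> 's) \<Rightarrow> bool" where
  "is_predictor I S P \<longleftrightarrow> (\<forall>f\<in>pred_domain I S. P f \<in> S)"

definition good_predictor :: "real set \<Rightarrow> 's set \<Rightarrow> ((real \<rightharpoonup> 's) \<Rightarrow> 's) \<Rightarrow> bool" where
  "good_predictor I S P \<longleftrightarrow> is_predictor I S P \<and>
     (\<forall>F. (\<forall>x\<in>I. F x \<in> S) \<longrightarrow> {t\<in>I. P (restr_to I F t) \<noteq> F t} \<in> null_sets lebesgue)"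

(* f \<circ> \<phi> has domain (inf I, \<phi>^{-1}(t_f)) since \<phi> is an increasing bijection of I
   and the identity outside I *)
definition anonymous :: "real set \<Rightarrow> 's set \<Rightarrow> (real \<Rightarrow> real) set \<Rightarrow> ((real \<rightharpoonup> 's) \<Rightarrow> 's) \<Rightarrow> bool" where
  "anonymous I S U P \<longleftrightarrow> (\<forall>f\<in>pred_domain I S. \<forall>\<phi>\<in>U. P f = P (f \<circ> \<phi>))"

end

theory Submission
  imports Defs
begin

text \<open>
  Call g \<in> U a shift for a function F at time t if g t < t and F \<circ> g agrees with F below t.
  At time t the predictor predicts F (g t) for some shift g, if there is one. Otherwise it takes
  the least G, in a fixed well-order of all functions, such that F agrees with G \<circ> \<phi> below t
  for some \<phi> \<in> U, and predicts G (\<phi> t); two such \<phi> agree at t, since otherwise they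
  would produce a shift. Both rules only see F up to precomposition with elements of U, which
  makes the predictor anonymous.

  Since the commutator subgroup acts freely, it is abelian by Hoelder's theorem. This forces all
  shifts at t to predict the same value. Hence if a shift g at t predicts wrongly, then g s \<ge> s at
  every earlier such time s, so g has a fixed point in [s, t), which is unique: such times are
  isolated from the left and therefore countable. Otherwise an error at t means that the least G
  changes immediately after t; as it changes monotonically in a well-order, this also happens
  only countably often.
\<close>

lemma countable_if_left_isolated:
  fixes X :: "real set"
  assumes "\<And>x. x \<in> X \<Longrightarrow> \<exists>p<x. \<forall>x'\<in>X. x' < x \<longrightarrow> x' \<le> p"
  shows "countable X"
proof -
  obtain p where p: "\<And>x. x \<in> X \<Longrightarrow> p x < x \<and> (\<forall>x'\<in>X. x' < x \<longrightarrow> x' \<le> p x)"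
    using assms by metis
  have "\<forall>x\<in>X. \<exists>r\<in>\<rat>. p x < r \<and> r < x"
    using p Rats_dense_in_real by blast
  then obtain q where q: "\<And>x. x \<in> X \<Longrightarrow> q x \<in> \<rat> \<and> p x < q x \<and> q x < x"
    by metis
  have not_less: "\<not> x < y" if "x \<in> X" "y \<in> X" "q x = q y" for x y
    using p[of x] p[of y] q[of x] q[of y] that by force
  have "inj_on q X"
    by (rule inj_onI) (metis not_less linorder_neqE_linordered_idom)
  moreover have "countable (q ` X)"
    using q countable_rat countable_subset by (metis image_subsetI)
  ultimately show ?thesis
    using countable_image_inj_on by blast
qed

lemma countable_if_right_isolated:
  fixes X :: "real set"
  assumes "\<And>x. x \<in> X \<Longrightarrow> \<exists>u>x. \<forall>x'\<in>X. x < x' \<longrightarrow> u \<le> x'"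
  shows "countable X"
proof -
  have "countable (uminus ` X)"
  proof (rule countable_if_left_isolated)
    fix y assume "y \<in> uminus ` X"
    then obtain x where x: "x \<in> X" "y = - x"
      by auto
    then obtain u where "u > x" "\<forall>x'\<in>X. x < x' \<longrightarrow> u \<le> x'"
      using assms by blast
    then show "\<exists>p<y. \<forall>y'\<in>uminus ` X. y' < y \<longrightarrow> y' \<le> p"
      using x(2) by (intro exI[of _ "- u"]) auto
  qed
  then show ?thesis
    by (rule countable_image_inj_on) (simp add: inj_on_def)
qed

lemma countable_level_set_maxima:
  fixes G :: "real \<Rightarrow> 'a"
  assumes wo: "Well_order r" and mono: "\<And>s t. s \<in> A \<Longrightarrow> t \<in> A \<Longrightarrow> s < t \<Longrightarrow> (G s, G t) \<in> r"
  shows "countable {t\<in>A. \<forall>t'\<in>A. t < t' \<longrightarrow> G t' \<noteq> G t}" (is "countable ?W")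
proof (rule countable_if_right_isolated)
  have r: "wo_rel r"
    using wo by (simp add: wo_rel_def)
  fix t assume t: "t \<in> ?W"
  show "\<exists>u>t. \<forall>t'\<in>?W. t < t' \<longrightarrow> u \<le> t'"
  proof (cases "\<exists>t'\<in>?W. t < t'")
    case False
    then show ?thesis
      by (intro exI[of _ "t + 1"]) auto
  next
    case True
    let ?Z = "G ` {t'\<in>?W. t < t'}"
    have "?Z \<subseteq> Field r"
      using mono t by (auto simp: Field_def)
    then have Z_least: "(wo_rel.minim r ?Z, z) \<in> r" if "z \<in> ?Z" for z
      using wo_rel.minim_least[OF r] that by blast
    obtain s where s: "s \<in> ?W" "t < s" "wo_rel.minim r ?Z = G s"
      using wo_rel.minim_in[OF r \<open>?Z \<subseteq> Field r\<close>] True by auto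
    have "s \<le> t'" if t': "t' \<in> ?W" "t < t'" for t'
    proof (rule ccontr)
      assume "\<not> s \<le> t'"
      then have "(G t', G s) \<in> r" and "G t' \<noteq> G s"
        using mono t' s(1) by auto
      moreover have "(G s, G t') \<in> r"
        using Z_least t' s(3) by auto
      ultimately show False
        using wo_rel.ANTISYM[OF r] by (auto dest: antisymD)
    qed
    then show ?thesis
      using s by blast
  qed
qed

lemma bij_if_homeo_plus:
  assumes "\<phi> \<in> homeo_plus I"
  shows "bij \<phi>"
proof -
  have "bij_betw \<phi> I I" and "bij_betw \<phi> (- I) (- I)"
    using assms by (auto simp: homeo_plus_def intro: bij_betw_cong[THEN iffD1, OF _ bij_betw_id])
  then have "bij_betw \<phi> (I \<union> - I) (I \<union> - I)"
    by (rule bij_betw_combine) auto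
  then show ?thesis by simp
qed

locale homeo_group =
  fixes I :: "real set" and U :: "(real \<Rightarrow> real) set"
  assumes interval: "is_interval I" and nonempty: "I \<noteq> {}"
    and subgroup: "is_subgroup_homeo I U"
begin

lemma id_mem: "id \<in> U"
  and comp_mem: "\<alpha> \<in> U \<Longrightarrow> \<beta> \<in> U \<Longrightarrow> \<alpha> \<circ> \<beta> \<in> U"
  and inv_mem: "\<alpha> \<in> U \<Longrightarrow> inv \<alpha> \<in> U"
  and homeo: "\<alpha> \<in> U \<Longrightarrow> \<alpha> \<in> homeo_plus I"
  using subgroup by (auto simp: is_subgroup_homeo_def)

lemma funpow_mem: "g \<in> U \<Longrightarrow> g ^^ n \<in> U"
  by (induction n) (auto intro: id_mem comp_mem)

lemma conj_mem: "\<phi> \<in> U \<Longrightarrow> g \<in> U \<Longrightarrow> inv \<phi> \<circ> g \<circ> \<phi> \<in> U"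
  by (intro comp_mem inv_mem)

lemma bij: "\<phi> \<in> U \<Longrightarrow> bij \<phi>"
  using homeo bij_if_homeo_plus by blast

lemma inv_apply [simp]: "\<phi> \<in> U \<Longrightarrow> inv \<phi> (\<phi> x) = x"
  using bij bij_is_inj inv_f_f by metis

lemma apply_inv [simp]: "\<phi> \<in> U \<Longrightarrow> \<phi> (inv \<phi> x) = x"
  using bij bij_is_surj surj_f_inv_f by metis

lemma inv_inv [simp]: "\<phi> \<in> U \<Longrightarrow> inv (inv \<phi>) = \<phi>"
  using bij inv_inv_eq by blast

lemma inv_comp [simp]: "\<phi> \<in> U \<Longrightarrow> inv \<phi> \<circ> \<phi> = id"
  and comp_inv [simp]: "\<phi> \<in> U \<Longrightarrow> \<phi> \<circ> inv \<phi> = id"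
  and inv_comp_cancel [simp]: "\<phi> \<in> U \<Longrightarrow> inv \<phi> \<circ> (\<phi> \<circ> g) = g"
  and comp_inv_cancel [simp]: "\<phi> \<in> U \<Longrightarrow> \<phi> \<circ> (inv \<phi> \<circ> g) = g"
  by (simp_all add: fun_eq_iff)

lemma maps_to [simp]: "\<phi> \<in> U \<Longrightarrow> x \<in> I \<Longrightarrow> \<phi> x \<in> I"
  using homeo by (auto simp: homeo_plus_def bij_betw_def)

lemma fixes_outside: "\<phi> \<in> U \<Longrightarrow> x \<notin> I \<Longrightarrow> \<phi> x = x"
  using homeo by (auto simp: homeo_plus_def)

lemma strict_mono: "\<phi> \<in> U \<Longrightarrow> x \<in> I \<Longrightarrow> y \<in> I \<Longrightarrow> x < y \<Longrightarrow> \<phi> x < \<phi> y"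
  using homeo by (auto simp: homeo_plus_def strict_mono_on_def)

lemma less_iff: "\<phi> \<in> U \<Longrightarrow> x \<in> I \<Longrightarrow> y \<in> I \<Longrightarrow> \<phi> x < \<phi> y \<longleftrightarrow> x < y"
  using strict_mono by (metis not_less_iff_gr_or_eq)

lemma le_iff: "\<phi> \<in> U \<Longrightarrow> x \<in> I \<Longrightarrow> y \<in> I \<Longrightarrow> \<phi> x \<le> \<phi> y \<longleftrightarrow> x \<le> y"
  using less_iff not_le by metis

lemma continuous: "\<phi> \<in> U \<Longrightarrow> continuous_on I \<phi>"
  using homeo by (auto simp: homeo_plus_def)

lemma atLeastAtMost_subset: "u \<in> I \<Longrightarrow> v \<in> I \<Longrightarrow> {u..v} \<subseteq> I"
  using interval unfolding is_interval_1 by (meson atLeastAtMost_iff subsetI)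

lemma fixed_point_between:
  assumes g: "g \<in> U" and uv: "u \<in> I" "v \<in> I" "u \<le> v"
    and sign_change: "u \<le> g u \<and> g v \<le> v \<or> g u \<le> u \<and> v \<le> g v"
  shows "\<exists>p\<in>{u..v}. g p = p"
proof -
  have cont: "continuous_on {u..v} (\<lambda>x. g x - x)"
    using continuous_on_subset[OF continuous[OF g] atLeastAtMost_subset[OF uv(1,2)]]
    by (intro continuous_on_diff continuous_on_id)
  from sign_change have "\<exists>p\<ge>u. p \<le> v \<and> g p - p = 0"
  proof (elim disjE conjE)
    assume "u \<le> g u" "g v \<le> v"
    then show ?thesis using IVT2'[of "\<lambda>x. g x - x" v 0 u, OF _ _ uv(3) cont] by simp
  next
    assume "g u \<le> u" "v \<le> g v"
    then show ?thesis using IVT'[of "\<lambda>x. g x - x" u 0 v, OF _ _ uv(3) cont] by simp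
  qed
  then show ?thesis by auto
qed

definition pointwise_less :: "(real \<Rightarrow> real) \<Rightarrow> (real \<Rightarrow> real) \<Rightarrow> bool" where
  "pointwise_less g h \<longleftrightarrow> (\<forall>x\<in>I. g x < h x)"

definition pointwise_le :: "(real \<Rightarrow> real) \<Rightarrow> (real \<Rightarrow> real) \<Rightarrow> bool" where
  "pointwise_le g h \<longleftrightarrow> (\<forall>x\<in>I. g x \<le> h x)"

abbreviation positive :: "(real \<Rightarrow> real) \<Rightarrow> bool" where
  "positive g \<equiv> pointwise_less id g"

lemma below_or_above_if_fixed_point_free:
  assumes g: "g \<in> U" and no_fix: "\<forall>x\<in>I. g x \<noteq> x"
  shows "pointwise_less g id \<or> positive g"
proof (rule ccontr)
  assume "\<not> ?thesis"
  then obtain x y where x: "x \<in> I" "\<not> g x < x" and y: "y \<in> I" "\<not> y < g y"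
    unfolding pointwise_less_def by auto
  then have "x < g x" "g y < y"
    using no_fix by (metis linorder_neqE_linordered_idom)+
  have "\<exists>p\<in>{min x y..max x y}. g p = p"
  proof (cases "x \<le> y")
    case True
    then show ?thesis
      using fixed_point_between[OF g x(1) y(1) True] \<open>x < g x\<close> \<open>g y < y\<close> by simp
  next
    case False
    then show ?thesis
      using fixed_point_between[OF g y(1) x(1)] \<open>x < g x\<close> \<open>g y < y\<close> by simp
  qed
  moreover have "{min x y..max x y} \<subseteq> I"
    using atLeastAtMost_subset x(1) y(1) by (simp add: min_def max_def)
  ultimately show False
    using no_fix by blast
qed

lemma pointwise_less_comp_left:
  "u \<in> U \<Longrightarrow> g \<in> U \<Longrightarrow> h \<in> U \<Longrightarrow> pointwise_less g h \<Longrightarrow> pointwise_less (u \<circ> g) (u \<circ> h)"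
  by (simp add: pointwise_less_def less_iff)

lemma pointwise_le_comp_left:
  "u \<in> U \<Longrightarrow> g \<in> U \<Longrightarrow> h \<in> U \<Longrightarrow> pointwise_le g h \<Longrightarrow> pointwise_le (u \<circ> g) (u \<circ> h)"
  by (simp add: pointwise_le_def le_iff)

lemma pointwise_less_comp_right:
  "u \<in> U \<Longrightarrow> pointwise_less g h \<Longrightarrow> pointwise_less (g \<circ> u) (h \<circ> u)"
  by (simp add: pointwise_less_def)

lemma pointwise_le_comp_right:
  "u \<in> U \<Longrightarrow> pointwise_le g h \<Longrightarrow> pointwise_le (g \<circ> u) (h \<circ> u)"
  by (simp add: pointwise_le_def)

lemma positive_imp_ne_id: "positive g \<Longrightarrow> g \<noteq> id"
  using nonempty by (auto simp: pointwise_less_def)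

lemma positive_inv_iff: "g \<in> U \<Longrightarrow> positive (inv g) \<longleftrightarrow> pointwise_less g id"
  unfolding pointwise_less_def
  by (metis apply_inv id_apply inv_mem maps_to)

end

section \<open>Hoelder's theorem\<close>

locale free_homeo_group = homeo_group +
  assumes free: "g \<in> U \<Longrightarrow> g \<noteq> id \<Longrightarrow> x \<in> I \<Longrightarrow> g x \<noteq> x"
begin

lemma trichotomy:
  assumes g: "g \<in> U" and h: "h \<in> U"
  shows "g = h \<or> pointwise_less g h \<or> pointwise_less h g"
proof -
  let ?d = "inv h \<circ> g"
  have d: "?d \<in> U"
    using g h by (intro comp_mem inv_mem)
  have g_eq: "h \<circ> ?d = g"
    using h by simp
  show ?thesis
  proof (cases "?d = id")
    case True
    then show ?thesis
      using g_eq by simp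
  next
    case False
    then have "pointwise_less ?d id \<or> positive ?d"
      using free[OF d] below_or_above_if_fixed_point_free[OF d] by blast
    then have "pointwise_less (h \<circ> ?d) (h \<circ> id) \<or> pointwise_less (h \<circ> id) (h \<circ> ?d)"
      using pointwise_less_comp_left[OF h] d id_mem by blast
    then show ?thesis
      using g_eq by simp
  qed
qed

lemma pointwise_le_if_not_less:
  "g \<in> U \<Longrightarrow> h \<in> U \<Longrightarrow> \<not> pointwise_less h g \<Longrightarrow> pointwise_le g h"
  using trichotomy[of g h] by (auto simp: pointwise_less_def pointwise_le_def less_imp_le)

lemma id_or_positive_or_positive_inv: "g \<in> U \<Longrightarrow> g = id \<or> positive g \<or> positive (inv g)"
  using trichotomy[OF _ id_mem] positive_inv_iff by blast

lemma archimedean: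
  assumes g: "g \<in> U" "positive g" and h: "h \<in> U"
  shows "\<exists>n. pointwise_less h (g ^^ n)"
proof (rule ccontr)
  assume "\<not> ?thesis"
  then have bounded: "pointwise_le (g ^^ n) h" for n
    using pointwise_le_if_not_less funpow_mem g h by blast
  obtain x where x: "x \<in> I"
    using nonempty by auto
  define s where "s n = (g ^^ n) x" for n
  have s_mem: "s n \<in> I" for n
    using funpow_mem[OF g(1)] x by (simp add: s_def)
  have s_Suc: "s (Suc n) = g (s n)" for n
    by (simp add: s_def)
  have "incseq s"
    using g(2) s_mem by (intro incseq_SucI) (simp add: pointwise_less_def s_Suc less_imp_le)
  moreover have s_le: "s n \<le> h x" for n
    using bounded x by (simp add: pointwise_le_def s_def)
  moreover have "bdd_above (range s)"
    using s_le by (intro bdd_aboveI2)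
  ultimately have lim: "s \<longlonglongrightarrow> Sup (range s)"
    by (intro LIMSEQ_incseq_SUP)
  define L where "L = Sup (range s)"
  have "s 0 \<le> L" "L \<le> h x"
    using lim \<open>incseq s\<close> s_le unfolding L_def by (auto intro: incseq_le LIMSEQ_le_const2)
  then have L: "L \<in> I"
    using atLeastAtMost_subset[OF x maps_to[OF h x]] by (auto simp: s_def)
  have "(\<lambda>n. g (s n)) \<longlonglongrightarrow> g L"
    using continuous_on_tendsto_compose[OF continuous[OF g(1)] lim[folded L_def] L] s_mem by simp
  moreover have "(\<lambda>n. g (s n)) \<longlonglongrightarrow> L"
    using LIMSEQ_Suc[OF lim[folded L_def]] by (simp add: s_Suc)
  ultimately have "g L = L"
    using LIMSEQ_unique by blast
  then show False
    using free[OF g(1) positive_imp_ne_id[OF g(2)] L] by simp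
qed

lemma power_bracket:
  assumes h: "h \<in> U" "positive h" and a: "a \<in> U" "positive a"
  shows "\<exists>m. pointwise_le (h ^^ m) a \<and> pointwise_less a (h ^^ Suc m)"
proof -
  define M where "M = (LEAST M. pointwise_less a (h ^^ M))"
  have M: "pointwise_less a (h ^^ M)"
    unfolding M_def using archimedean[OF h a(1)] by (rule LeastI_ex)
  moreover have "M \<noteq> 0"
    using M a(2) nonempty by (auto simp: pointwise_less_def) (meson less_asym)
  then obtain m where m: "M = Suc m"
    using not0_implies_Suc by blast
  have "\<not> pointwise_less a (h ^^ m)"
    using not_less_Least[of m "\<lambda>M. pointwise_less a (h ^^ M)"] m unfolding M_def by simp
  then have "pointwise_le (h ^^ m) a"
    using pointwise_le_if_not_less funpow_mem h(1) a(1) by blast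
  with M m show ?thesis
    by blast
qed

lemma power_of_least_positive:
  assumes e: "e \<in> U" "positive e" and least: "\<forall>g\<in>U. positive g \<longrightarrow> pointwise_le e g"
    and a: "a \<in> U" "positive a"
  shows "\<exists>n. a = e ^^ n"
proof -
  obtain m where m: "pointwise_le (e ^^ m) a" "pointwise_less a (e ^^ Suc m)"
    using power_bracket[OF e a] by blast
  have em: "e ^^ m \<in> U" "inv (e ^^ m) \<in> U"
    using funpow_mem[OF e(1)] inv_mem by blast+
  let ?d = "inv (e ^^ m) \<circ> a"
  have d: "?d \<in> U"
    using em a(1) by (intro comp_mem)
  have "pointwise_le (inv (e ^^ m) \<circ> e ^^ m) ?d"
    using pointwise_le_comp_left[OF em(2) em(1) a(1) m(1)] .
  then have d_ge: "pointwise_le id ?d"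
    using em(1) by simp
  have "pointwise_less ?d (inv (e ^^ m) \<circ> (e ^^ m \<circ> e))"
    using pointwise_less_comp_left[OF em(2) a(1) funpow_mem[OF e(1)] m(2)] by (simp only: funpow_Suc_right)
  then have d_less: "pointwise_less ?d e"
    using em(1) by simp
  from trichotomy[OF d id_mem] show ?thesis
  proof (elim disjE)
    assume "?d = id"
    then have "e ^^ m \<circ> ?d = e ^^ m"
      by simp
    then show ?thesis
      using em(1) by (metis comp_inv_cancel)
  next
    assume "pointwise_less ?d id"
    with d_ge show ?thesis
      using nonempty by (auto simp: pointwise_less_def pointwise_le_def) (meson not_le)
  next
    assume "positive ?d"
    then have "pointwise_le e ?d"
      using least d by blast
    with d_less show ?thesis
      using nonempty by (auto simp: pointwise_less_def pointwise_le_def) (meson not_le)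
  qed
qed

lemma exists_positive_square_le:
  assumes c: "c \<in> U" and h: "h \<in> U" "positive h" "pointwise_less h c"
  shows "\<exists>k\<in>U. positive k \<and> pointwise_le (k \<circ> k) c"
proof (cases "pointwise_less c (h \<circ> h)")
  case False
  then show ?thesis
    using h pointwise_le_if_not_less[OF comp_mem[OF h(1) h(1)] c] by blast
next
  case True
  let ?k = "inv h \<circ> c"
  have k: "?k \<in> U"
    using h(1) c by (intro comp_mem inv_mem)
  have "pointwise_less (inv h \<circ> h) ?k"
    using pointwise_less_comp_left[OF inv_mem h(1) c h(3)] h(1) .
  then have "positive ?k"
    using h(1) by simp
  moreover have "pointwise_less ?k (inv h \<circ> (h \<circ> h))"
    using pointwise_less_comp_left[OF inv_mem c comp_mem True] h(1) by blast
  then have "pointwise_le ?k h"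
    using h(1) by (simp add: pointwise_less_def pointwise_le_def less_imp_le)
  then have "pointwise_le (?k \<circ> ?k) (h \<circ> ?k)"
    using pointwise_le_comp_right[OF k] by blast
  then have "pointwise_le (?k \<circ> ?k) c"
    using h(1) by simp
  ultimately show ?thesis
    using k by blast
qed

lemma commutator_not_above_square:
  assumes a: "a \<in> U" "positive a" and b: "b \<in> U" "positive b" and k: "k \<in> U" "positive k"
  shows "\<not> pointwise_le (k \<circ> k) (a \<circ> b \<circ> inv a \<circ> inv b)"
proof
  let ?c = "a \<circ> b \<circ> inv a \<circ> inv b"
  assume square_le: "pointwise_le (k \<circ> k) ?c"
  obtain x where x: "x \<in> I"
    using nonempty by auto
  obtain m where m: "pointwise_le (k ^^ m) a" "pointwise_less a (k ^^ Suc m)"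
    using power_bracket[OF k a] by blast
  obtain n where n: "pointwise_le (k ^^ n) b" "pointwise_less b (k ^^ Suc n)"
    using power_bracket[OF k b] by blast
  have kp: "k ^^ j \<in> U" for j
    using funpow_mem[OF k(1)] .
  \<comment> \<open>a b < k^2 k^n k^m \<le> k^2 b a \<le> [a, b] b a = a b\<close>
  have "(a \<circ> b) x < (a \<circ> k ^^ Suc n) x"
    using pointwise_less_comp_left[OF a(1) b(1) kp n(2)] x by (simp add: pointwise_less_def)
  also have "\<dots> < (k ^^ Suc m \<circ> k ^^ Suc n) x"
    using pointwise_less_comp_right[OF kp[of "Suc n"] m(2)] x by (simp add: pointwise_less_def)
  also have "k ^^ Suc m \<circ> k ^^ Suc n = (k \<circ> k) \<circ> (k ^^ n \<circ> k ^^ m)"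
    by (simp only: comp_assoc flip: funpow_add funpow.simps(2)) (simp add: add.commute)
  also have "((k \<circ> k) \<circ> (k ^^ n \<circ> k ^^ m)) x \<le> ((k \<circ> k) \<circ> (k ^^ n \<circ> a)) x"
    using pointwise_le_comp_left[OF comp_mem[OF k(1) k(1)] comp_mem[OF kp kp] comp_mem[OF kp a(1)]
        pointwise_le_comp_left[OF kp kp a(1) m(1)]] x by (simp add: pointwise_le_def)
  also have "\<dots> \<le> ((k \<circ> k) \<circ> (b \<circ> a)) x"
    using pointwise_le_comp_left[OF comp_mem[OF k(1) k(1)] comp_mem[OF kp a(1)] comp_mem[OF b(1) a(1)]
        pointwise_le_comp_right[OF a(1) n(1)]] x by (simp add: pointwise_le_def)
  also have "\<dots> \<le> (?c \<circ> (b \<circ> a)) x"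
    using pointwise_le_comp_right[OF comp_mem[OF b(1) a(1)] square_le] x by (simp add: pointwise_le_def)
  also have "?c \<circ> (b \<circ> a) = a \<circ> b"
    using a(1) b(1) by (simp add: fun_eq_iff)
  finally show False
    by simp
qed

lemma commutator_not_positive:
  assumes a: "a \<in> U" "positive a" and b: "b \<in> U" "positive b"
  shows "\<not> positive (a \<circ> b \<circ> inv a \<circ> inv b)"
proof
  define c where "c = a \<circ> b \<circ> inv a \<circ> inv b"
  assume "positive (a \<circ> b \<circ> inv a \<circ> inv b)"
  then have c_pos: "positive c"
    by (simp add: c_def)
  have c: "c \<in> U"
    unfolding c_def using a(1) b(1) by (intro comp_mem inv_mem)
  show False
  proof (cases "\<exists>h\<in>U. positive h \<and> pointwise_less h c")
    case True
    then show False
      using exists_positive_square_le[OF c] commutator_not_above_square[OF a b] by (auto simp: c_def)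
  next
    case False
    then have "\<forall>g\<in>U. positive g \<longrightarrow> pointwise_le c g"
      using pointwise_le_if_not_less[OF c] by blast
    then obtain i j where "a = c ^^ i" "b = c ^^ j"
      using power_of_least_positive[OF c c_pos] a b by metis
    then have "a \<circ> b = b \<circ> a"
      by (simp add: add.commute flip: funpow_add)
    then have "c = id"
      unfolding c_def using a(1) b(1) by (simp add: fun_eq_iff)
    then show False
      using positive_imp_ne_id[OF c_pos] by simp
  qed
qed

lemma positive_commute:
  assumes a: "a \<in> U" "positive a" and b: "b \<in> U" "positive b"
  shows "a \<circ> b = b \<circ> a"
proof -
  let ?c = "a \<circ> b \<circ> inv a \<circ> inv b"
  have c: "?c \<in> U"
    using a(1) b(1) by (intro comp_mem inv_mem)
  from trichotomy[OF c id_mem] show ?thesis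
  proof (elim disjE)
    assume "?c = id"
    then have "?c \<circ> (b \<circ> a) = b \<circ> a"
      by simp
    moreover have "?c \<circ> (b \<circ> a) = a \<circ> b"
      using a(1) b(1) by (simp add: fun_eq_iff)
    ultimately show ?thesis
      by simp
  next
    assume "pointwise_less ?c id"
    then have "positive (inv ?c)"
      using positive_inv_iff[OF c] by blast
    moreover have "inv ?c = b \<circ> a \<circ> inv b \<circ> inv a"
      using a(1) b(1) by (intro inv_unique_comp) (simp_all add: fun_eq_iff)
    ultimately show ?thesis
      using commutator_not_positive[OF b a] by simp
  next
    assume "positive ?c"
    then show ?thesis
      using commutator_not_positive[OF a b] by simp
  qed
qed

lemma commute_inv: "b \<in> U \<Longrightarrow> a \<circ> b = b \<circ> a \<Longrightarrow> a \<circ> inv b = inv b \<circ> a"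
  by (metis comp_assoc comp_id comp_inv inv_comp)

theorem holder:
  assumes a: "a \<in> U" and b: "b \<in> U"
  shows "a \<circ> b = b \<circ> a"
proof -
  have commute_positive: "a \<circ> b = b \<circ> a" if a: "a \<in> U" "positive a" for a
    using id_or_positive_or_positive_inv[OF b]
  proof (elim disjE)
    assume "positive (inv b)"
    then have "a \<circ> inv b = inv b \<circ> a"
      using positive_commute[OF a inv_mem[OF b]] by blast
    then show ?thesis
      using commute_inv[OF inv_mem[OF b]] b by simp
  qed (use positive_commute[OF a b] in auto)
  from id_or_positive_or_positive_inv[OF a] show ?thesis
  proof (elim disjE)
    assume "positive (inv a)"
    then have "b \<circ> inv a = inv a \<circ> b"
      using commute_positive[OF inv_mem[OF a]] by simp
    then show ?thesis
      using commute_inv[OF inv_mem[OF a]] a by simp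
  qed (use commute_positive[OF a] in auto)
qed

end

context homeo_group
begin

lemma commutator_subgroup_subset: "commutator_subgroup U \<subseteq> U"
proof
  fix g assume "g \<in> commutator_subgroup U"
  then show "g \<in> U"
    by induction (blast intro: id_mem comp_mem inv_mem)+
qed

lemma is_subgroup_homeo_commutator_subgroup: "is_subgroup_homeo I (commutator_subgroup U)"
  using commutator_subgroup_subset homeo
  by (auto simp: is_subgroup_homeo_def intro: commutator_subgroup.intros)

lemma inv_conj: "u \<in> U \<Longrightarrow> g \<in> U \<Longrightarrow> inv (inv u \<circ> g \<circ> u) = inv u \<circ> inv g \<circ> u"
  by (intro inv_unique_comp) (simp_all add: fun_eq_iff inv_mem)

lemma commutator_subgroup_conj:
  assumes "k \<in> commutator_subgroup U" and u: "u \<in> U"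
  shows "inv u \<circ> k \<circ> u \<in> commutator_subgroup U"
  using assms(1)
proof induction
  case comm_id
  have "inv u \<circ> id \<circ> u = id"
    using u by simp
  then show ?case
    using commutator_subgroup.comm_id by metis
next
  case (comm_gen \<alpha> \<beta>)
  let ?\<alpha> = "inv u \<circ> \<alpha> \<circ> u" and ?\<beta> = "inv u \<circ> \<beta> \<circ> u"
  have "inv u \<circ> (\<alpha> \<circ> \<beta> \<circ> inv \<alpha> \<circ> inv \<beta>) \<circ> u = ?\<alpha> \<circ> ?\<beta> \<circ> inv ?\<alpha> \<circ> inv ?\<beta>"
    using comm_gen u by (simp add: inv_conj fun_eq_iff)
  also have "\<dots> \<in> commutator_subgroup U"
    using comm_gen u by (intro commutator_subgroup.comm_gen conj_mem)
  finally show ?case .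
next
  case (comm_comp g h)
  have "inv u \<circ> (g \<circ> h) \<circ> u = (inv u \<circ> g \<circ> u) \<circ> (inv u \<circ> h \<circ> u)"
    using u by (simp add: fun_eq_iff)
  also have "\<dots> \<in> commutator_subgroup U"
    using comm_comp.IH by (rule commutator_subgroup.comm_comp)
  finally show ?case .
next
  case (comm_inv g)
  have "g \<in> U"
    using comm_inv commutator_subgroup_subset by blast
  then have "inv u \<circ> inv g \<circ> u = inv (inv u \<circ> g \<circ> u)"
    using u by (simp add: inv_conj)
  also have "\<dots> \<in> commutator_subgroup U"
    using comm_inv.IH by (rule commutator_subgroup.comm_inv)
  finally show ?case .
qed

lemma inv_commutator_mem:
  "\<alpha> \<in> U \<Longrightarrow> \<beta> \<in> U \<Longrightarrow> inv \<alpha> \<circ> inv \<beta> \<circ> \<alpha> \<circ> \<beta> \<in> commutator_subgroup U"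
  using commutator_subgroup.comm_gen[OF inv_mem inv_mem] by fastforce

section \<open>Shifts\<close>

definition agree_below :: "real \<Rightarrow> (real \<Rightarrow> 'b) \<Rightarrow> (real \<Rightarrow> 'b) \<Rightarrow> bool" where
  "agree_below t F F' \<longleftrightarrow> (\<forall>z\<in>I. z < t \<longrightarrow> F z = F' z)"

lemma agree_below_comp:
  assumes \<phi>: "\<phi> \<in> U" and t: "t \<in> I"
  shows "agree_below (inv \<phi> t) (F \<circ> \<phi>) (F' \<circ> \<phi>) \<longleftrightarrow> agree_below t F F'"
proof
  assume agree: "agree_below (inv \<phi> t) (F \<circ> \<phi>) (F' \<circ> \<phi>)"
  show "agree_below t F F'"
    unfolding agree_below_def
  proof (intro ballI impI)
    fix w assume "w \<in> I" "w < t"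
    then have "inv \<phi> w \<in> I" "inv \<phi> w < inv \<phi> t"
      using less_iff[OF inv_mem[OF \<phi>]] \<phi> t by (simp_all add: inv_mem)
    then show "F w = F' w"
      using agree \<phi> by (auto simp: agree_below_def)
  qed
next
  assume "agree_below t F F'"
  moreover have "\<phi> z < t" if "z \<in> I" "z < inv \<phi> t" for z
    using less_iff[OF \<phi> that(1), of "inv \<phi> t"] that \<phi> t by (simp add: inv_mem)
  ultimately show "agree_below (inv \<phi> t) (F \<circ> \<phi>) (F' \<circ> \<phi>)"
    using \<phi> by (simp add: agree_below_def)
qed

lemma agree_below_mono: "agree_below t F F' \<Longrightarrow> s \<le> t \<Longrightarrow> agree_below s F F'"
  by (simp add: agree_below_def)

lemma agree_below_left_cong: "agree_below t F F' \<Longrightarrow> agree_below t F H \<longleftrightarrow> agree_below t F' H"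
  by (simp add: agree_below_def)

definition shifts :: "(real \<Rightarrow> 'b) \<Rightarrow> real \<Rightarrow> (real \<Rightarrow> real) set" where
  "shifts F t = {g \<in> U. g t < t \<and> agree_below t (F \<circ> g) F}"

lemma shift_mem: "g \<in> shifts F t \<Longrightarrow> g \<in> U"
  by (simp add: shifts_def)

lemma shift_less:
  assumes "g \<in> shifts F t" "t \<in> I" "z \<in> I" "z \<le> t"
  shows "g z < t"
proof -
  have "g z \<le> g t" "g t < t"
    using assms le_iff by (auto simp: shifts_def)
  then show ?thesis
    by linarith
qed

lemma shift_apply: "g \<in> shifts F t \<Longrightarrow> z \<in> I \<Longrightarrow> z < t \<Longrightarrow> F (g z) = F z"
  by (simp add: shifts_def agree_below_def)

lemma commuting_shifts_agree:
  assumes t: "t \<in> I" and a: "a \<in> shifts F t" and b: "b \<in> shifts F t" and ab: "a \<circ> b = b \<circ> a"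
  shows "F (a t) = F (b t)"
proof -
  have "F (a (b t)) = F (b t)"
    using shift_apply[OF a] shift_less[OF b t t] b t by (simp add: shift_mem)
  moreover have "F (b (a t)) = F (a t)"
    using shift_apply[OF b] shift_less[OF a t t] a t by (simp add: shift_mem)
  moreover have "a (b t) = b (a t)"
    using ab by (metis comp_apply)
  ultimately show ?thesis
    by simp
qed

lemma conj_shift:
  assumes t: "t \<in> I" and u: "u \<in> shifts F t"
    and g: "g \<in> shifts F t" and g_below: "pointwise_less g id"
  shows "inv u \<circ> g \<circ> u \<in> shifts F t \<and> F ((inv u \<circ> g \<circ> u) t) = F (u t)"
proof -
  let ?k = "inv u \<circ> g \<circ> u"
  have uU: "u \<in> U" and gU: "g \<in> U"
    using u g by (simp_all add: shift_mem)
  have k_less: "?k z < z" if z: "z \<in> I" for z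
  proof -
    have "g (u z) < u z"
      using g_below uU z by (simp add: pointwise_less_def)
    then have "inv u (g (u z)) < inv u (u z)"
      using less_iff[OF inv_mem[OF uU], of "g (u z)" "u z"] gU uU z by simp
    then show ?thesis
      using uU by simp
  qed
  have k_eq: "F (?k z) = F (u z)" if z: "z \<in> I" "z \<le> t" for z
  proof -
    have "?k z < t"
      using k_less[OF z(1)] z(2) by linarith
    then have "F (u (?k z)) = F (?k z)"
      using shift_apply[OF u, of "?k z"] z gU uU by (simp add: inv_mem)
    moreover have "F (g (u z)) = F (u z)"
      using shift_apply[OF g] shift_less[OF u t] z uU by simp
    ultimately show ?thesis
      using uU by simp
  qed
  have "agree_below t (F \<circ> ?k) F"
    unfolding agree_below_def using k_eq shift_apply[OF u] by auto
  then show ?thesis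
    using k_less[OF t] k_eq[OF t] conj_mem[OF uU gU] by (simp add: shifts_def)
qed

lemma commutator_shift:
  assumes t: "t \<in> I" and \<alpha>: "\<alpha> \<in> shifts F t" and \<beta>: "\<beta> \<in> shifts F t"
    and below: "pointwise_less (inv \<alpha> \<circ> inv \<beta> \<circ> \<alpha> \<circ> \<beta>) id"
  shows "inv \<alpha> \<circ> inv \<beta> \<circ> \<alpha> \<circ> \<beta> \<in> shifts F t \<and> F ((inv \<alpha> \<circ> inv \<beta> \<circ> \<alpha> \<circ> \<beta>) t) = F (\<beta> t)"
proof -
  define k where "k = inv \<alpha> \<circ> inv \<beta> \<circ> \<alpha> \<circ> \<beta>"
  have \<alpha>U: "\<alpha> \<in> U" and \<beta>U: "\<beta> \<in> U"
    using \<alpha> \<beta> by (simp_all add: shift_mem)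
  have kU: "k \<in> U"
    unfolding k_def using \<alpha>U \<beta>U by (intro comp_mem inv_mem)
  have k_less: "k z < z" if "z \<in> I" for z
    using below that by (simp add: pointwise_less_def k_def)
  have swap: "\<beta> (\<alpha> (k z)) = \<alpha> (\<beta> z)" for z
    using \<alpha>U \<beta>U by (simp add: k_def)
  have "F (k z) = F z" if z: "z \<in> I" "z < t" for z
  proof -
    have "k z < t"
      using k_less[OF z(1)] z(2) by linarith
    then have "\<alpha> (k z) < t"
      using shift_less[OF \<alpha> t, of "k z"] kU z by simp
    then have "F (\<beta> (\<alpha> (k z))) = F (\<alpha> (k z))"
      using shift_apply[OF \<beta>] \<alpha>U kU z by simp
    moreover have "F (\<alpha> (k z)) = F (k z)"
      using shift_apply[OF \<alpha>, of "k z"] \<open>k z < t\<close> z kU by simp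
    moreover have "F (\<alpha> (\<beta> z)) = F z"
      using shift_apply[OF \<alpha>] shift_apply[OF \<beta>] shift_less[OF \<beta> t] z \<beta>U by simp
    ultimately show ?thesis
      by (simp add: swap)
  qed
  then have "k \<in> shifts F t"
    using kU k_less[OF t] by (simp add: shifts_def agree_below_def)
  moreover have "F (k t) = F (\<beta> t)"
  proof -
    have "F (k t) = F (\<alpha> (k t))"
      using shift_apply[OF \<alpha>] k_less t kU by simp
    also have "\<dots> = F (\<beta> (\<alpha> (k t)))"
      using shift_apply[OF \<beta>] shift_less[OF \<alpha> t] k_less t kU \<alpha>U by (simp add: less_imp_le)
    also have "\<dots> = F (\<beta> t)"
      using shift_apply[OF \<alpha>] shift_less[OF \<beta> t] t \<beta>U by (simp add: swap)
    finally show ?thesis .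
  qed
  ultimately show ?thesis
    by (simp add: k_def)
qed

section \<open>The predictor\<close>

lemma comp_invariant_if_subset:
  assumes subset: "\<And>F t \<phi>. t \<in> I \<Longrightarrow> \<phi> \<in> U \<Longrightarrow> X (F \<circ> \<phi>) (inv \<phi> t) \<subseteq> X F t"
    and t: "t \<in> I" and \<phi>: "\<phi> \<in> U"
  shows "X (F \<circ> \<phi>) (inv \<phi> t) = X F t"
proof
  show "X (F \<circ> \<phi>) (inv \<phi> t) \<subseteq> X F t"
    using subset t \<phi> .
  have "X ((F \<circ> \<phi>) \<circ> inv \<phi>) (inv (inv \<phi>) (inv \<phi> t)) \<subseteq> X (F \<circ> \<phi>) (inv \<phi> t)"
    by (rule subset) (use t \<phi> in \<open>simp_all add: inv_mem\<close>)
  moreover have "(F \<circ> \<phi>) \<circ> inv \<phi> = F" and "inv (inv \<phi>) (inv \<phi> t) = t"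
    using \<phi> by (simp_all add: comp_assoc)
  ultimately show "X F t \<subseteq> X (F \<circ> \<phi>) (inv \<phi> t)"
    by simp
qed

definition shift_values :: "(real \<Rightarrow> 's) \<Rightarrow> real \<Rightarrow> 's set" where
  "shift_values F t = (\<lambda>g. F (g t)) ` shifts F t"

definition extensions :: "'s set \<Rightarrow> (real \<Rightarrow> 's) \<Rightarrow> real \<Rightarrow> (real \<Rightarrow> 's) set" where
  "extensions S F t = {G. range G \<subseteq> S \<and> (\<exists>\<phi>\<in>U. agree_below t F (G \<circ> \<phi>))}"

definition least_extension :: "(real \<Rightarrow> 's) rel \<Rightarrow> 's set \<Rightarrow> (real \<Rightarrow> 's) \<Rightarrow> real \<Rightarrow> real \<Rightarrow> 's" where
  "least_extension r S F t = wo_rel.minim r (extensions S F t)"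

definition extension_values :: "(real \<Rightarrow> 's) rel \<Rightarrow> 's set \<Rightarrow> (real \<Rightarrow> 's) \<Rightarrow> real \<Rightarrow> 's set" where
  "extension_values r S F t =
     (\<lambda>\<phi>. least_extension r S F t (\<phi> t)) ` {\<phi> \<in> U. agree_below t F (least_extension r S F t \<circ> \<phi>)}"

definition prediction :: "(real \<Rightarrow> 's) rel \<Rightarrow> 's set \<Rightarrow> (real \<Rightarrow> 's) \<Rightarrow> real \<Rightarrow> 's" where
  "prediction r S F t =
     (if shift_values F t \<noteq> {} then SOME v. v \<in> shift_values F t else SOME v. v \<in> extension_values r S F t)"

lemma shift_values_comp_subset:
  assumes t: "t \<in> I" and \<phi>: "\<phi> \<in> U"
  shows "shift_values (F \<circ> \<phi>) (inv \<phi> t) \<subseteq> shift_values F t"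
proof
  fix v assume "v \<in> shift_values (F \<circ> \<phi>) (inv \<phi> t)"
  then obtain g where g: "g \<in> shifts (F \<circ> \<phi>) (inv \<phi> t)" and v: "v = F (\<phi> (g (inv \<phi> t)))"
    by (auto simp: shift_values_def)
  let ?g = "\<phi> \<circ> g \<circ> inv \<phi>"
  have gU: "g \<in> U" and g_less: "g (inv \<phi> t) < inv \<phi> t"
    and agree: "agree_below (inv \<phi> t) ((F \<circ> ?g) \<circ> \<phi>) (F \<circ> \<phi>)"
    using g \<phi> by (auto simp: shifts_def comp_assoc)
  have "?g \<in> U"
    using conj_mem[OF inv_mem[OF \<phi>] gU] \<phi> by simp
  moreover have "?g t < t"
    using g_less less_iff[OF \<phi>, of "g (inv \<phi> t)" "inv \<phi> t"] gU \<phi> t by (simp add: inv_mem)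
  moreover have "agree_below t (F \<circ> ?g) F"
    using agree agree_below_comp[OF \<phi> t] by blast
  ultimately have "?g \<in> shifts F t"
    by (simp add: shifts_def)
  moreover have "v = F (?g t)"
    using v by simp
  ultimately show "v \<in> shift_values F t"
    unfolding shift_values_def image_iff by blast
qed

lemma shift_values_comp:
  "t \<in> I \<Longrightarrow> \<phi> \<in> U \<Longrightarrow> shift_values (F \<circ> \<phi>) (inv \<phi> t) = shift_values F t"
  by (rule comp_invariant_if_subset[where X = shift_values, OF shift_values_comp_subset])

lemma extensions_comp_subset:
  assumes t: "t \<in> I" and \<phi>: "\<phi> \<in> U"
  shows "extensions S (F \<circ> \<phi>) (inv \<phi> t) \<subseteq> extensions S F t"
proof
  fix G assume "G \<in> extensions S (F \<circ> \<phi>) (inv \<phi> t)"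
  then obtain \<psi> where G: "range G \<subseteq> S" and \<psi>: "\<psi> \<in> U" "agree_below (inv \<phi> t) (F \<circ> \<phi>) (G \<circ> \<psi>)"
    by (auto simp: extensions_def)
  have "(G \<circ> (\<psi> \<circ> inv \<phi>)) \<circ> \<phi> = G \<circ> \<psi>"
    using \<phi> by (simp add: fun_eq_iff)
  then have "agree_below t F (G \<circ> (\<psi> \<circ> inv \<phi>))"
    using \<psi>(2) agree_below_comp[OF \<phi> t, of F "G \<circ> (\<psi> \<circ> inv \<phi>)"] by simp
  then show "G \<in> extensions S F t"
    using G comp_mem[OF \<psi>(1) inv_mem[OF \<phi>]] by (auto simp: extensions_def)
qed

lemma extensions_comp:
  "t \<in> I \<Longrightarrow> \<phi> \<in> U \<Longrightarrow> extensions S (F \<circ> \<phi>) (inv \<phi> t) = extensions S F t"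
  by (rule comp_invariant_if_subset[where X = "extensions S", OF extensions_comp_subset])

lemma least_extension_comp:
  "t \<in> I \<Longrightarrow> \<phi> \<in> U \<Longrightarrow> least_extension r S (F \<circ> \<phi>) (inv \<phi> t) = least_extension r S F t"
  by (simp add: least_extension_def extensions_comp)

lemma extension_values_comp_subset:
  assumes t: "t \<in> I" and \<phi>: "\<phi> \<in> U"
  shows "extension_values r S (F \<circ> \<phi>) (inv \<phi> t) \<subseteq> extension_values r S F t"
proof
  let ?G = "least_extension r S F t"
  fix v assume "v \<in> extension_values r S (F \<circ> \<phi>) (inv \<phi> t)"
  then obtain \<psi> where \<psi>: "\<psi> \<in> U" "agree_below (inv \<phi> t) (F \<circ> \<phi>) (?G \<circ> \<psi>)"
    and v: "v = ?G (\<psi> (inv \<phi> t))"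
    by (auto simp: extension_values_def least_extension_comp[OF t \<phi>])
  have "(?G \<circ> (\<psi> \<circ> inv \<phi>)) \<circ> \<phi> = ?G \<circ> \<psi>"
    using \<phi> by (simp add: fun_eq_iff)
  then have "agree_below t F (?G \<circ> (\<psi> \<circ> inv \<phi>))"
    using \<psi>(2) agree_below_comp[OF \<phi> t, of F "?G \<circ> (\<psi> \<circ> inv \<phi>)"] by simp
  then show "v \<in> extension_values r S F t"
    unfolding extension_values_def image_iff
    using v comp_mem[OF \<psi>(1) inv_mem[OF \<phi>]] by (intro bexI[of _ "\<psi> \<circ> inv \<phi>"]) auto
qed

lemma extension_values_comp:
  "t \<in> I \<Longrightarrow> \<phi> \<in> U \<Longrightarrow> extension_values r S (F \<circ> \<phi>) (inv \<phi> t) = extension_values r S F t"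
  by (rule comp_invariant_if_subset[where X = "extension_values r S", OF extension_values_comp_subset])

lemma prediction_comp:
  "t \<in> I \<Longrightarrow> \<phi> \<in> U \<Longrightarrow> prediction r S (F \<circ> \<phi>) (inv \<phi> t) = prediction r S F t"
  by (simp add: prediction_def shift_values_comp extension_values_comp)

lemma prediction_cong:
  assumes t: "t \<in> I" and agree: "agree_below t F F'"
  shows "prediction r S F t = prediction r S F' t"
proof -
  have agree_shifted: "F (g z) = F' (g z)" if "g \<in> U" "g t < t" "z \<in> I" "z \<le> t" for g z
  proof -
    have "g z \<le> g t"
      using le_iff[OF that(1) that(3) t] that(4) by simp
    then show ?thesis
      using agree that by (simp add: agree_below_def)
  qed
  have "agree_below t (F \<circ> g) F \<longleftrightarrow> agree_below t (F' \<circ> g) F'" if "g \<in> U" "g t < t" for g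
    using agree agree_shifted[OF that] unfolding agree_below_def by auto
  then have shifts: "shifts F t = shifts F' t"
    unfolding shifts_def by blast
  have "shift_values F t = shift_values F' t"
    unfolding shift_values_def shifts
    using agree_shifted t by (intro image_cong) (auto simp: shifts_def)
  moreover have "extensions S F t = extensions S F' t"
    using agree_below_left_cong[OF agree] by (simp add: extensions_def)
  then have "extension_values r S F t = extension_values r S F' t"
    using agree_below_left_cong[OF agree] by (simp add: extension_values_def least_extension_def)
  ultimately show ?thesis
    by (simp add: prediction_def)
qed

lemma extensions_nonempty:
  assumes "S \<noteq> {}" and F: "\<forall>x\<in>I. x < t \<longrightarrow> F x \<in> S"
  shows "extensions S F t \<noteq> {}"
proof -
  obtain s where s: "s \<in> S"
    using assms(1) by blast
  let ?G = "\<lambda>x. if x \<in> I \<and> x < t then F x else s"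
  have "agree_below t F (?G \<circ> id)"
    by (simp add: agree_below_def)
  moreover have "range ?G \<subseteq> S"
    using F s by auto
  ultimately have "?G \<in> extensions S F t"
    unfolding extensions_def using id_mem by blast
  then show ?thesis
    by blast
qed

lemma least_extension_mem:
  assumes "Well_order r" "Field r = UNIV" "extensions S F t \<noteq> {}"
  shows "least_extension r S F t \<in> extensions S F t"
  unfolding least_extension_def by (rule wo_rel.minim_in) (use assms in \<open>simp_all add: wo_rel_def\<close>)

lemma prediction_mem:
  assumes r: "Well_order r" "Field r = UNIV" and S: "S \<noteq> {}"
    and t: "t \<in> I" and F: "\<forall>x\<in>I. x < t \<longrightarrow> F x \<in> S"
  shows "prediction r S F t \<in> S"
proof (cases "shift_values F t = {}")
  case False
  then have "(SOME v. v \<in> shift_values F t) \<in> shift_values F t"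
    by (simp add: some_in_eq)
  then obtain g where "g \<in> shifts F t" "prediction r S F t = F (g t)"
    using False by (auto simp: prediction_def shift_values_def)
  then show ?thesis
    using F t by (auto simp: shifts_def)
next
  case True
  let ?G = "least_extension r S F t"
  have "?G \<in> extensions S F t"
    using least_extension_mem[OF r extensions_nonempty[OF S F]] .
  then have "range ?G \<subseteq> S" and "extension_values r S F t \<noteq> {}"
    by (auto simp: extensions_def extension_values_def)
  then have "(SOME v. v \<in> extension_values r S F t) \<in> extension_values r S F t"
    by (simp add: some_in_eq)
  then show ?thesis
    using True \<open>range ?G \<subseteq> S\<close> by (auto simp: prediction_def extension_values_def)
qed

lemma shift_if_factorizations_differ:
  assumes t: "t \<in> I" and a: "a \<in> U" "agree_below t F (G \<circ> a)" and b: "b \<in> U" "agree_below t F (G \<circ> b)"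
    and less: "a t < b t"
  shows "inv b \<circ> a \<in> shifts F t"
proof -
  let ?g = "inv b \<circ> a"
  have g: "?g \<in> U"
    using a(1) b(1) by (intro comp_mem inv_mem)
  have "?g t < t"
    using less_iff[OF inv_mem[OF b(1)], of "a t" "b t"] less a(1) b(1) t by simp
  moreover have "F (?g z) = F z" if z: "z \<in> I" "z < t" for z
  proof -
    have "?g z < t"
      using le_iff[OF g z(1) t] z \<open>?g t < t\<close> by (metis less_imp_le le_less_trans)
    moreover have "?g z \<in> I"
      using a(1) b(1) z by (simp add: inv_mem)
    ultimately have "F (?g z) = G (b (?g z))"
      using b(2) unfolding agree_below_def comp_def by blast
    then show ?thesis
      using a(2) b(1) z by (simp add: agree_below_def)
  qed
  ultimately show ?thesis
    using g by (simp add: shifts_def agree_below_def)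
qed

lemma least_extension_mono:
  assumes r: "Well_order r" "Field r = UNIV" and S: "S \<noteq> {}"
    and F: "\<forall>x\<in>I. x < t \<longrightarrow> F x \<in> S" and less: "s < t"
  shows "(least_extension r S F s, least_extension r S F t) \<in> r"
proof -
  have "extensions S F t \<subseteq> extensions S F s"
    using agree_below_mono less by (fastforce simp: extensions_def)
  then have "least_extension r S F t \<in> extensions S F s"
    using least_extension_mem[OF r extensions_nonempty[OF S F]] by blast
  moreover have "wo_rel r"
    using r(1) by (simp add: wo_rel_def)
  ultimately show ?thesis
    unfolding least_extension_def[of r S F s] using r(2) by (intro wo_rel.minim_least) auto
qed

lemma prediction_by_shift:
  assumes "shifts F t \<noteq> {}"
  shows "\<exists>g\<in>shifts F t. prediction r S F t = F (g t)"
proof -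
  have "(SOME v. v \<in> shift_values F t) \<in> shift_values F t"
    using assms by (simp add: some_in_eq shift_values_def)
  then show ?thesis
    using assms by (auto simp: prediction_def shift_values_def)
qed

lemma prediction_correct_if_extension_persists:
  assumes t: "t \<in> I" "t < t'" and no_shift: "shifts F t = {}"
    and persists: "least_extension r S F t \<in> extensions S F t'"
  shows "prediction r S F t = F t"
proof -
  let ?G = "least_extension r S F t"
  obtain \<phi>' where \<phi>': "\<phi>' \<in> U" "agree_below t' F (?G \<circ> \<phi>')"
    using persists by (auto simp: extensions_def)
  then have F_t: "F t = ?G (\<phi>' t)"
    using t by (simp add: agree_below_def)
  have agree': "agree_below t F (?G \<circ> \<phi>')"
    using agree_below_mono[OF \<phi>'(2)] t(2) by simp
  then have "extension_values r S F t \<noteq> {}"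
    using \<phi>'(1) by (auto simp: extension_values_def)
  then have "(SOME v. v \<in> extension_values r S F t) \<in> extension_values r S F t"
    by (simp add: some_in_eq)
  then obtain \<phi> where \<phi>: "\<phi> \<in> U" "agree_below t F (?G \<circ> \<phi>)"
    and predicted: "prediction r S F t = ?G (\<phi> t)"
    using no_shift by (auto simp: prediction_def extension_values_def shift_values_def)
  have "\<not> \<phi> t < \<phi>' t" and "\<not> \<phi>' t < \<phi> t"
    using shift_if_factorizations_differ[OF t(1) \<phi> \<phi>'(1) agree']
      shift_if_factorizations_differ[OF t(1) \<phi>'(1) agree' \<phi>] no_shift by auto
  then show ?thesis
    using predicted F_t by simp
qed

definition horizon :: "(real \<rightharpoonup> 's) \<Rightarrow> real" where
  "horizon f = (THE t. t \<in> I \<and> dom f = {x\<in>I. x < t})"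

definition predictor :: "(real \<Rightarrow> 's) rel \<Rightarrow> 's set \<Rightarrow> (real \<rightharpoonup> 's) \<Rightarrow> 's" where
  "predictor r S f = prediction r S (\<lambda>x. the (f x)) (horizon f)"

lemma horizon_eq:
  assumes t: "t \<in> I" and dom: "dom f = {x\<in>I. x < t}"
  shows "horizon f = t"
  unfolding horizon_def
proof (rule the_equality)
  fix t' assume t': "t' \<in> I \<and> dom f = {x\<in>I. x < t'}"
  then have "\<not> t < t'" and "\<not> t' < t"
    using t dom by blast+
  then show "t' = t"
    by simp
qed (use assms in simp)

lemma dom_comp:
  assumes \<phi>: "\<phi> \<in> U" and t: "t \<in> I" and dom: "dom f = {x\<in>I. x < t}"
  shows "dom (f \<circ> \<phi>) = {x\<in>I. x < inv \<phi> t}"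
proof -
  have "\<phi> x \<in> I \<and> \<phi> x < t \<longleftrightarrow> x \<in> I \<and> x < inv \<phi> t" for x
  proof (cases "x \<in> I")
    case True
    then show ?thesis
      using less_iff[OF \<phi> True, of "inv \<phi> t"] \<phi> t by (simp add: inv_mem)
  next
    case False
    then show ?thesis
      using fixes_outside[OF \<phi> False] by simp
  qed
  then show ?thesis
    using dom by (auto simp: dom_def)
qed

lemma predictor_comp:
  assumes f: "f \<in> pred_domain I S" and \<phi>: "\<phi> \<in> U"
  shows "predictor r S (f \<circ> \<phi>) = predictor r S f"
proof -
  obtain t where t: "t \<in> I" and dom: "dom f = {x\<in>I. x < t}"
    using f by (auto simp: pred_domain_def)
  have "horizon (f \<circ> \<phi>) = inv \<phi> t"
    using horizon_eq[OF inv_mem[THEN maps_to, OF \<phi> t] dom_comp[OF \<phi> t dom]] .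
  moreover have "(\<lambda>x. the ((f \<circ> \<phi>) x)) = (\<lambda>x. the (f x)) \<circ> \<phi>"
    by (simp add: fun_eq_iff)
  ultimately show ?thesis
    using prediction_comp[OF t \<phi>] horizon_eq[OF t dom] by (simp add: predictor_def)
qed

lemma predictor_restr_to:
  assumes t: "t \<in> I"
  shows "predictor r S (restr_to I F t) = prediction r S F t"
proof -
  have "dom (restr_to I F t) = {x\<in>I. x < t}"
    by (auto simp: restr_to_def)
  then have "horizon (restr_to I F t) = t"
    using horizon_eq[OF t] by blast
  moreover have "agree_below t (\<lambda>x. the (restr_to I F t x)) F"
    by (simp add: agree_below_def restr_to_def)
  ultimately show ?thesis
    using prediction_cong[OF t] by (simp add: predictor_def)
qed

lemma predictor_mem:
  assumes "Well_order r" "Field r = UNIV" "S \<noteq> {}" and f: "f \<in> pred_domain I S"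
  shows "predictor r S f \<in> S"
proof -
  obtain t where t: "t \<in> I" and dom: "dom f = {x\<in>I. x < t}" and ran: "ran f \<subseteq> S"
    using f by (auto simp: pred_domain_def)
  have "the (f x) \<in> S" if "x \<in> I" "x < t" for x
  proof -
    have "x \<in> dom f"
      using that dom by simp
    then obtain v where "f x = Some v"
      by auto
    then show ?thesis
      using ran by (auto intro: ranI)
  qed
  then show ?thesis
    using prediction_mem[OF assms(1-3) t] horizon_eq[OF t dom] by (simp add: predictor_def)
qed

end

section \<open>Goodness of the predictor\<close>

locale free_commutators = homeo_group +
  assumes commutators_act_freely:
      "g \<in> commutator_subgroup U \<Longrightarrow> g \<noteq> id \<Longrightarrow> x \<in> I \<Longrightarrow> g x \<noteq> x"
    and fixed_point_unique:
      "g \<in> U \<Longrightarrow> g \<noteq> id \<Longrightarrow> x \<in> I \<Longrightarrow> y \<in> I \<Longrightarrow> g x = x \<Longrightarrow> g y = y \<Longrightarrow> x = y"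
begin

sublocale commutators: free_homeo_group I "commutator_subgroup U"
  using interval nonempty is_subgroup_homeo_commutator_subgroup commutators_act_freely
  by unfold_locales auto

text \<open>
  The commutator k is a shift predicting F (\<beta> t) and its conjugate by \<alpha> is a shift predicting
  F (\<alpha> t); both lie in the commutator subgroup, so they commute by Hoelder's theorem.
\<close>

lemma shifts_agree_if_commutator_below:
  assumes t: "t \<in> I" and \<alpha>: "\<alpha> \<in> shifts F t" and \<beta>: "\<beta> \<in> shifts F t"
    and below: "pointwise_less (inv \<alpha> \<circ> inv \<beta> \<circ> \<alpha> \<circ> \<beta>) id"
  shows "F (\<alpha> t) = F (\<beta> t)"
proof -
  define k where "k = inv \<alpha> \<circ> inv \<beta> \<circ> \<alpha> \<circ> \<beta>"
  have \<alpha>U: "\<alpha> \<in> U"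
    using \<alpha> by (simp add: shift_mem)
  have k_comm: "k \<in> commutator_subgroup U"
    unfolding k_def using \<alpha> \<beta> by (intro inv_commutator_mem shift_mem)
  obtain k_shift: "k \<in> shifts F t" and "F (k t) = F (\<beta> t)"
    using commutator_shift[OF t \<alpha> \<beta> below] by (simp add: k_def)
  moreover obtain "inv \<alpha> \<circ> k \<circ> \<alpha> \<in> shifts F t" "F ((inv \<alpha> \<circ> k \<circ> \<alpha>) t) = F (\<alpha> t)"
    using conj_shift[OF t \<alpha> k_shift] below by (simp add: k_def)
  moreover have "k \<circ> (inv \<alpha> \<circ> k \<circ> \<alpha>) = (inv \<alpha> \<circ> k \<circ> \<alpha>) \<circ> k"
    using commutators.holder[OF k_comm commutator_subgroup_conj[OF k_comm \<alpha>U]] .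
  ultimately show ?thesis
    using commuting_shifts_agree[OF t k_shift] by metis
qed

lemma shifts_agree:
  assumes t: "t \<in> I" and \<alpha>: "\<alpha> \<in> shifts F t" and \<beta>: "\<beta> \<in> shifts F t"
  shows "F (\<alpha> t) = F (\<beta> t)"
proof -
  let ?k = "inv \<alpha> \<circ> inv \<beta> \<circ> \<alpha> \<circ> \<beta>"
  have \<alpha>U: "\<alpha> \<in> U" and \<beta>U: "\<beta> \<in> U"
    using \<alpha> \<beta> by (simp_all add: shift_mem)
  have k_comm: "?k \<in> commutator_subgroup U"
    using \<alpha>U \<beta>U by (rule inv_commutator_mem)
  from commutators.trichotomy[OF k_comm commutators.id_mem] show ?thesis
  proof (elim disjE)
    assume "?k = id"
    moreover have "\<beta> \<circ> \<alpha> \<circ> ?k = \<alpha> \<circ> \<beta>"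
      using \<alpha>U \<beta>U by (simp add: fun_eq_iff)
    ultimately show ?thesis
      using commuting_shifts_agree[OF t \<alpha> \<beta>] by simp
  next
    assume "pointwise_less ?k id"
    then show ?thesis
      using shifts_agree_if_commutator_below[OF t \<alpha> \<beta>] by blast
  next
    assume "positive ?k"
    moreover have "inv ?k = inv \<beta> \<circ> inv \<alpha> \<circ> \<beta> \<circ> \<alpha>"
      using \<alpha>U \<beta>U by (intro inv_unique_comp) (simp_all add: fun_eq_iff)
    ultimately have "pointwise_less (inv \<beta> \<circ> inv \<alpha> \<circ> \<beta> \<circ> \<alpha>) id"
      using positive_inv_iff[OF inv_mem] k_comm commutator_subgroup_subset by force
    then show ?thesis
      using shifts_agree_if_commutator_below[OF t \<beta> \<alpha>] by simp
  qed
qed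

lemma fixed_point_before_disagreement:
  assumes y: "y \<in> I" and g: "g \<in> shifts F y" and y': "y' \<in> I" "y' < y"
    and h: "h \<in> shifts F y'" "F (h y') \<noteq> F y'"
  shows "\<exists>q\<in>I. y' \<le> q \<and> q < y \<and> g q = q"
proof -
  have gU: "g \<in> U" and gy: "g y < y"
    using g by (auto simp: shifts_def)
  have "\<not> g y' < y'"
  proof
    assume "g y' < y'"
    then have "g \<in> shifts F y'"
      using g y'(2) gU by (auto simp: shifts_def agree_below_def)
    then have "F (g y') = F (h y')"
      using shifts_agree[OF y'(1) _ h(1)] by blast
    moreover have "F (g y') = F y'"
      using shift_apply[OF g y'] .
    ultimately show False
      using h(2) by simp
  qed
  then obtain q where q: "y' \<le> q" "q \<le> y" "g q = q"
    using fixed_point_between[OF gU y'(1) y] y'(2) gy by auto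
  moreover have "q \<in> I"
    using q atLeastAtMost_subset[OF y'(1) y] by auto
  moreover have "q \<noteq> y"
    using q(3) gy by auto
  ultimately show ?thesis
    by force
qed

lemma countable_disagreeing_shifts:
  "countable {y\<in>I. \<exists>g\<in>shifts F y. F (g y) \<noteq> F y}" (is "countable ?B")
proof (rule countable_if_left_isolated)
  fix y assume "y \<in> ?B"
  then obtain g where y: "y \<in> I" and g: "g \<in> shifts F y" "F (g y) \<noteq> F y"
    by blast
  have gU: "g \<in> U" and "g \<noteq> id"
    using g by (auto simp: shifts_def)
  show "\<exists>p<y. \<forall>y'\<in>?B. y' < y \<longrightarrow> y' \<le> p"
  proof (cases "\<exists>y'\<in>?B. y' < y")
    case True
    then obtain w where w: "w \<in> I" "w < y" "g w = w"
      using fixed_point_before_disagreement[OF y g(1)] by blast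
    have "y' \<le> w" if y': "y' \<in> ?B" "y' < y" for y'
    proof -
      obtain q where "q \<in> I" "y' \<le> q" "g q = q"
        using fixed_point_before_disagreement[OF y g(1)] y' by blast
      then show ?thesis
        using fixed_point_unique[OF gU \<open>g \<noteq> id\<close> _ w(1)] w(3) by fastforce
    qed
    then show ?thesis
      using w(2) by blast
  next
    case False
    then show ?thesis
      by (intro exI[of _ "y - 1"]) auto
  qed
qed

lemma countable_mispredictions:
  assumes r: "Well_order r" "Field r = UNIV" and S: "S \<noteq> {}" and F: "\<forall>x\<in>I. F x \<in> S"
  shows "countable {t\<in>I. prediction r S F t \<noteq> F t}"
proof -
  let ?G = "least_extension r S F"
  let ?B = "{y\<in>I. \<exists>g\<in>shifts F y. F (g y) \<noteq> F y}"
  let ?W = "{t\<in>I. \<forall>t'\<in>I. t < t' \<longrightarrow> ?G t' \<noteq> ?G t}"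
  have G_mem: "?G t \<in> extensions S F t" for t
    using least_extension_mem[OF r extensions_nonempty[OF S]] F by simp
  have "{t\<in>I. prediction r S F t \<noteq> F t} \<subseteq> ?B \<union> ?W"
  proof
    fix t assume "t \<in> {t\<in>I. prediction r S F t \<noteq> F t}"
    then have t: "t \<in> I" and wrong: "prediction r S F t \<noteq> F t"
      by auto
    show "t \<in> ?B \<union> ?W"
    proof (cases "shifts F t = {}")
      case False
      then show ?thesis
        using prediction_by_shift[of F t r S] wrong t by auto
    next
      case True
      have "?G t' \<noteq> ?G t" if "t < t'" for t'
      proof
        assume "?G t' = ?G t"
        then have "?G t \<in> extensions S F t'"
          using G_mem[of t'] by simp
        then show False
          using prediction_correct_if_extension_persists[OF t that True] wrong by blast
      qed
      then show ?thesis
        using t by blast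
    qed
  qed
  moreover have "countable ?B"
    by (rule countable_disagreeing_shifts)
  moreover have "countable ?W"
    using least_extension_mono[OF r S] F by (intro countable_level_set_maxima[OF r(1)]) simp
  ultimately show ?thesis
    by (meson countable_Un countable_subset)
qed

theorem exists_good_anonymous_predictor:
  fixes S :: "'s set"
  assumes S: "S \<noteq> {}"
  shows "\<exists>P. good_predictor I S P \<and> anonymous I S U P"
proof -
  obtain r :: "(real \<Rightarrow> 's) rel" where r: "Well_order r" "Field r = UNIV"
    using well_ordering[where 'a = "real \<Rightarrow> 's"] by (elim exE conjE)
  have "{t\<in>I. predictor r S (restr_to I F t) \<noteq> F t} \<in> null_sets lebesgue"
    if "\<forall>x\<in>I. F x \<in> S" for F
  proof -
    have "{t\<in>I. predictor r S (restr_to I F t) \<noteq> F t} = {t\<in>I. prediction r S F t \<noteq> F t}"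
      by (rule Collect_cong) (simp add: predictor_restr_to cong: conj_cong)
    then have "countable {t\<in>I. predictor r S (restr_to I F t) \<noteq> F t}"
      using countable_mispredictions[OF r S that] by simp
    then show ?thesis
      by (intro null_sets_completionI countable_imp_null_set_lborel)
  qed
  then have "good_predictor I S (predictor r S)"
    using predictor_mem[OF r S] by (simp add: good_predictor_def is_predictor_def)
  moreover have "anonymous I S U (predictor r S)"
    unfolding anonymous_def by (simp add: predictor_comp)
  ultimately show ?thesis
    by blast
qed

end

theorem theorem1p5:
  fixes I :: "real set" and U :: "(real \<Rightarrow> real) set" and S :: "'s set"
  assumes "open I" and "is_interval I" and "I \<noteq> {}"
    and "is_subgroup_homeo I U"
    and "\<forall>g\<in>commutator_subgroup U. g \<noteq> id \<longrightarrow> (\<forall>x\<in>I. g x \<noteq> x)"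
    and "\<forall>g\<in>U. g \<noteq> id \<longrightarrow> (\<forall>x\<in>I. \<forall>y\<in>I. g x = x \<and> g y = y \<longrightarrow> x = y)"
    and "S \<noteq> {}"
  shows "\<exists>P. good_predictor I S P \<and> anonymous I S U P"
proof -
  have "free_commutators I U"
  proof (intro free_commutators.intro free_commutators_axioms.intro homeo_group.intro)
    show "g x \<noteq> x" if "g \<in> commutator_subgroup U" "g \<noteq> id" "x \<in> I" for g x
      using assms(5) that by blast
    show "x = y" if "g \<in> U" "g \<noteq> id" "x \<in> I" "y \<in> I" "g x = x" "g y = y" for g x y
      using assms(6) that by blast
  qed (fact assms)+
  then show ?thesis
    using assms(7) by (rule free_commutators.exists_good_anonymous_predictor)
qed

end
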